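(* Let $X$ be a topological space in which every open set is a union of countably many clopen sets. Assume that $C_p(X,\{0,1\})$ is an $\alpha_1$ space, and let $\mathcal{U}=\{U_n:n\in\mathbb{N}\}$ be a bijectively enumerated family of open subsets of $X$. Then the Marczewski map $\mathcal{U}:X\to P(\mathbb{N})$ is a discrete limit of a sequence of continuous functions $\Psi_m:X\to P(\mathbb{N})$.
   Context: $C_p(X,\{0,1\})$ is the set of continuous functions $X\to\{0,1\}$ with the topology of pointwise convergence. In a space $Y$, a countable set $A$ of distinct points converges to $y$ if some (equivalently every) bijective enumeration of $A$ converges to $y$; $Y$ is an $\alpha_1$ space if for each $y\in Y$ and each sequence $A_1,A_2,\dots$ of countably infinite sets each converging to $y$, there are cofinite $B_n\subseteq A_n$ such that $\bigcup_nB_n$ converges to $y$. $P(\mathbb{N})$ carries the Cantor space topology (identified with $\{0,1\}^{\mathbb{N}}$ via characteristic functions). The Marczewski map of a bijectively enumerated family $\mathcal{U}=\{U_n\}$ of subsets of $X$ is $\mathcal{U}(x)=\{n\in\mathbb{N}:x\in U_n\}$. A function $f$ on $X$ is a discrete limit of functions $f_m$ if for each $x\in X$, $f_m(x)=f(x)$ for all but finitely many $m$. *)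

theory Defs
  imports "HOL-Analysis.Analysis"
begin

text \<open>The two-point space \<open>{0,1}\<close> is rendered as \<open>bool\<close> with the discrete topology.\<close>

definition Cp01 :: "'a topology \<Rightarrow> ('a \<Rightarrow> bool) topology" where
  "Cp01 X = subtopology (product_topology (\<lambda>_. discrete_topology (UNIV::bool set)) (topspace X))
                        {f. continuous_map X (discrete_topology UNIV) f}"

definition cantor :: "(nat \<Rightarrow> bool) topology" where
  "cantor = product_topology (\<lambda>_. discrete_topology (UNIV::bool set)) UNIV"

definition powerset_nat_top :: "nat set topology" where
  "powerset_nat_top = topology (\<lambda>S. openin cantor ((\<lambda>A n. n \<in> A) ` S))"

definition set_converges :: "'a topology \<Rightarrow> 'a set \<Rightarrow> 'a \<Rightarrow> bool" where
  "set_converges T A y \<longleftrightarrow>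
     (\<exists>e. bij_betw e (UNIV::nat set) A \<and> limitin T e y sequentially)"

definition alpha1_space :: "'a topology \<Rightarrow> bool" where
  "alpha1_space T \<longleftrightarrow>
     (\<forall>y \<in> topspace T. \<forall>A :: nat \<Rightarrow> 'a set.
        (\<forall>n. A n \<subseteq> topspace T \<and> countable (A n) \<and> infinite (A n) \<and> set_converges T (A n) y) \<longrightarrow>
        (\<exists>B. (\<forall>n. B n \<subseteq> A n \<and> finite (A n - B n)) \<and> set_converges T (\<Union>n. B n) y))"

definition marczewski :: "(nat \<Rightarrow> 'a set) \<Rightarrow> 'a \<Rightarrow> nat set" where
  "marczewski U x = {n. x \<in> U n}"

definition discrete_limit :: "'a set \<Rightarrow> (nat \<Rightarrow> 'a \<Rightarrow> 'b) \<Rightarrow> ('a \<Rightarrow> 'b) \<Rightarrow> bool" where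
  "discrete_limit S fs f \<longleftrightarrow> (\<forall>x \<in> S. \<forall>\<^sub>F m in sequentially. fs m x = f x)"

lemma istopology_powerset_nat_top:
  "istopology (\<lambda>S. openin cantor ((\<lambda>A n. n \<in> A) ` S))"
proof -
  have inj: "inj (\<lambda>(A::nat set) n. n \<in> A)" by (auto simp: inj_def fun_eq_iff)
  show ?thesis unfolding istopology_def
    by (auto simp: image_Int[OF inj] image_Union intro: openin_Int openin_Union)
qed

end

theory Submission
  imports Defs
begin

(* Identify P(N) with Cantor space {0,1}^N: a map Psi : X -> P(N) is continuous
   iff every coordinate set {x. n \<in> Psi x} is clopen.  Each open U n is a countable disjoint
   union of clopen sets, so the characteristic functions of the pieces form a countable
   point-finite family A n \<subseteq> C_p(X,{0,1}) whose supports (cozero sets) cover U n.  A countably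
   infinite point-finite family converges, as a set, to the zero function.  Applying alpha_1 to
   the infinite families gives cofinite B n \<subseteq> A n such that \<Union>n. B n converges to zero; for an
   enumeration e of this union every point lies in the support of only finitely many e j.
   With the finite remainders R n = A n - B n, the approximant
     Psi m x = {n. x \<in> supp f for some f \<in> R n, or x \<in> supp (e j) \<subseteq> U n for some j \<le> m}
   has clopen coordinate sets, satisfies Psi m x \<subseteq> U(x), and equals the Marczewski value U(x)
   as soon as m exceeds every j with e j x. *)

definition clopenin :: "'a topology \<Rightarrow> 'a set \<Rightarrow> bool" where
  "clopenin X S \<longleftrightarrow> openin X S \<and> closedin X S"

lemma clopenin_Un: "clopenin X S \<Longrightarrow> clopenin X T \<Longrightarrow> clopenin X (S \<union> T)"
  unfolding clopenin_def by auto

lemma clopenin_Diff: "clopenin X S \<Longrightarrow> clopenin X T \<Longrightarrow> clopenin X (S - T)"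
  unfolding clopenin_def by auto

lemma clopenin_Union: "finite \<F> \<Longrightarrow> (\<And>S. S \<in> \<F> \<Longrightarrow> clopenin X S) \<Longrightarrow> clopenin X (\<Union>\<F>)"
  unfolding clopenin_def by (auto intro: closedin_Union)

definition cozero :: "'a topology \<Rightarrow> ('a \<Rightarrow> bool) \<Rightarrow> 'a set" where
  "cozero X f = {x \<in> topspace X. f x}"

lemma continuous_map_bool_iff:
  "continuous_map X (discrete_topology UNIV) f \<longleftrightarrow> clopenin X (cozero X f)"
proof
  assume f: "continuous_map X (discrete_topology UNIV) f"
  have "openin X {x \<in> topspace X. f x \<in> {True}}"
    using f unfolding continuous_map by (metis openin_discrete_topology subset_UNIV)
  moreover have "closedin X {x \<in> topspace X. f x \<in> {True}}"
    using f unfolding continuous_map_closedin by (metis closedin_discrete_topology subset_UNIV)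
  ultimately show "clopenin X (cozero X f)" by (simp add: clopenin_def cozero_def)
next
  assume clopen: "clopenin X (cozero X f)"
  have preimage: "{x \<in> topspace X. f x \<in> T} =
      (if True \<in> T then cozero X f else {}) \<union> (if False \<in> T then topspace X - cozero X f else {})"
    for T by (auto simp: cozero_def) (metis (full_types))+
  show "continuous_map X (discrete_topology UNIV) f"
    unfolding continuous_map preimage using clopen
    by (auto simp: clopenin_def closedin_def intro!: openin_Un)
qed

lemma limitin_discrete_iff:
  "limitin (discrete_topology UNIV) f l F \<longleftrightarrow> eventually (\<lambda>j. f j = l) F"
  unfolding limitin_def
  by (metis (mono_tags, lifting) eventually_mono insertI1 openin_discrete_topology singletonD subset_UNIV topspace_discrete_topology UNIV_I)

lemma topspace_Cp01:
  "f \<in> topspace (Cp01 X) \<longleftrightarrow> f \<in> extensional (topspace X) \<and> clopenin X (cozero X f)"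
  unfolding Cp01_def by (auto simp: topspace_product_topology PiE_def continuous_map_bool_iff)

definition zero_map :: "'a topology \<Rightarrow> 'a \<Rightarrow> bool" where
  "zero_map X = (\<lambda>x. if x \<in> topspace X then False else undefined)"

lemma zero_map_in_Cp01: "zero_map X \<in> topspace (Cp01 X)"
  unfolding topspace_Cp01 zero_map_def cozero_def clopenin_def by (auto simp: extensional_def)

definition char_map :: "'a topology \<Rightarrow> 'a set \<Rightarrow> 'a \<Rightarrow> bool" where
  "char_map X S = (\<lambda>x. if x \<in> topspace X then x \<in> S else undefined)"

lemma cozero_char_map: "S \<subseteq> topspace X \<Longrightarrow> cozero X (char_map X S) = S"
  unfolding cozero_def char_map_def by auto

lemma char_map_in_Cp01:
  assumes "clopenin X S" shows "char_map X S \<in> topspace (Cp01 X)"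
proof -
  have "S \<subseteq> topspace X" using assms openin_subset unfolding clopenin_def by blast
  then show ?thesis
    using assms unfolding topspace_Cp01 cozero_char_map[OF \<open>S \<subseteq> topspace X\<close>]
    by (simp add: char_map_def extensional_def)
qed

lemma limitin_Cp01_zero_map:
  "limitin (Cp01 X) e (zero_map X) sequentially \<longleftrightarrow>
     (\<forall>\<^sub>F j in sequentially. e j \<in> topspace (Cp01 X)) \<and> (\<forall>x \<in> topspace X. finite {j. e j x})"
proof -
  have vanishing: "(\<forall>\<^sub>F j in sequentially. e j x = zero_map X x) \<longleftrightarrow> finite {j. e j x}"
    if "x \<in> topspace X" for x
    using that by (simp add: zero_map_def eventually_cofinite flip: cofinite_eq_sequentially)
  have "zero_map X \<in> extensional (topspace X)" "continuous_map X (discrete_topology UNIV) (zero_map X)"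
    using zero_map_in_Cp01[of X] unfolding topspace_Cp01 continuous_map_bool_iff by auto
  then show ?thesis
    unfolding Cp01_def limitin_subtopology limitin_componentwise limitin_discrete_iff
    by (auto simp: vanishing eventually_conj_iff elim: eventually_mono)
qed

lemma openin_powerset_nat_top:
  "openin powerset_nat_top S \<longleftrightarrow> openin cantor ((\<lambda>A n. n \<in> A) ` S)"
  unfolding powerset_nat_top_def using istopology_powerset_nat_top by simp

lemma topspace_powerset_nat_top: "topspace powerset_nat_top = UNIV"
proof -
  have "(\<lambda>A n. n \<in> A) ` (UNIV :: nat set set) = UNIV"
    by (auto simp: image_iff) (metis mem_Collect_eq)
  moreover have "topspace cantor = UNIV" by (simp add: cantor_def)
  ultimately have "openin powerset_nat_top UNIV"
    by (metis openin_powerset_nat_top openin_topspace)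
  then show ?thesis by (meson openin_subset subset_UNIV subset_antisym)
qed

lemma continuous_map_powerset_nat_top:
  assumes "\<And>n. clopenin X {x \<in> topspace X. n \<in> \<psi> x}"
  shows "continuous_map X powerset_nat_top \<psi>"
proof -
  have cantor_map: "continuous_map X cantor (\<lambda>x n. n \<in> \<psi> x)"
    using assms by (simp add: cantor_def continuous_map_componentwise_UNIV continuous_map_bool_iff cozero_def)
  have inj: "inj (\<lambda>(A::nat set) n. n \<in> A)" by (auto simp: inj_def fun_eq_iff)
  show ?thesis unfolding continuous_map
  proof (intro conjI allI impI)
    fix S assume "openin powerset_nat_top S"
    then have "openin cantor ((\<lambda>A n. n \<in> A) ` S)" by (simp add: openin_powerset_nat_top)
    moreover have "{x \<in> topspace X. \<psi> x \<in> S} = {x \<in> topspace X. (\<lambda>n. n \<in> \<psi> x) \<in> (\<lambda>A n. n \<in> A) ` S}"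
      using inj_image_mem_iff[OF inj] by blast
    ultimately show "openin X {x \<in> topspace X. \<psi> x \<in> S}"
      using cantor_map unfolding continuous_map by simp
  qed (simp add: topspace_powerset_nat_top)
qed

definition point_finite :: "'a topology \<Rightarrow> ('a \<Rightarrow> bool) set \<Rightarrow> bool" where
  "point_finite X A \<longleftrightarrow> (\<forall>x \<in> topspace X. finite {f \<in> A. f x})"

lemma set_converges_zero_map_if_point_finite:
  assumes "A \<subseteq> topspace (Cp01 X)" "countable A" "infinite A" "point_finite X A"
  shows "set_converges (Cp01 X) A (zero_map X)"
proof -
  obtain e0 :: "_ \<Rightarrow> nat" where "bij_betw e0 A UNIV"
    using assms(2,3) countableE_infinite by blast
  define e where "e = inv_into A e0"
  have e: "bij_betw e UNIV A" unfolding e_def by (rule bij_betw_inv_into) fact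
  have "finite {j. e j x}" if "x \<in> topspace X" for x
  proof -
    have "{j. e j x} = e -` {f \<in> A. f x}"
      using e bij_betwE by fastforce
    moreover have "finite (e -` {f \<in> A. f x})"
      using assms(4) that
      by (intro finite_vimageI bij_betw_imp_inj_on[OF e]) (simp add: point_finite_def)
    ultimately show ?thesis by simp
  qed
  moreover have "e j \<in> topspace (Cp01 X)" for j
    using e assms(1) bij_betwE by blast
  ultimately show ?thesis
    unfolding set_converges_def limitin_Cp01_zero_map using e by auto
qed

lemma enumeration_if_set_converges_zero_map:
  assumes "set_converges (Cp01 X) S (zero_map X)"
  obtains e where "bij_betw e (UNIV::nat set) S" "\<forall>x \<in> topspace X. finite {j. e j x}"
  using assms unfolding set_converges_def limitin_Cp01_zero_map by blast

definition point_finite_clopen_cover :: "'a topology \<Rightarrow> 'a set \<Rightarrow> ('a \<Rightarrow> bool) set \<Rightarrow> bool" where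
  "point_finite_clopen_cover X V A \<longleftrightarrow>
     countable A \<and> A \<subseteq> topspace (Cp01 X) \<and> point_finite X A \<and>
     (\<forall>f \<in> A. cozero X f \<subseteq> V) \<and> (\<forall>x \<in> V. \<exists>f \<in> A. f x)"

lemma disjoint_clopen_sequence:
  assumes "countable \<C>" "\<forall>C \<in> \<C>. clopenin X C"
  obtains D :: "nat \<Rightarrow> 'a set" where "\<And>k. clopenin X (D k)" "disjoint_family D" "(\<Union>k. D k) = \<Union>\<C>"
proof -
  define c where "c = from_nat_into (insert {} \<C>)"
  have range_c: "range c = insert {} \<C>"
    unfolding c_def using assms(1) by (simp add: range_from_nat_into)
  have "clopenin X (c k)" for k
    using range_c assms(2) unfolding clopenin_def by (metis closedin_empty insertE openin_empty rangeI)
  then have "clopenin X (disjointed c k)" for k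
    unfolding disjointed_def by (intro clopenin_Diff clopenin_Union) auto
  moreover have "(\<Union>k. disjointed c k) = \<Union>\<C>"
    using range_c by (simp add: UN_disjointed_eq)
  ultimately show ?thesis using that disjoint_family_disjointed by blast
qed

(* Hence every countable union of clopen sets has a point-finite clopen cover: take the
   characteristic functions of the disjoint pieces; each point lies in at most one piece. *)
lemma point_finite_clopen_cover_exists:
  assumes "countable \<C>" "\<forall>C \<in> \<C>. clopenin X C"
  shows "\<exists>A. point_finite_clopen_cover X (\<Union>\<C>) A"
proof -
  obtain D :: "nat \<Rightarrow> 'a set" where clopen: "\<And>k. clopenin X (D k)" and disj: "disjoint_family D" and D: "(\<Union>k. D k) = \<Union>\<C>"
    using disjoint_clopen_sequence[OF assms] by blast
  have D_sub: "D k \<subseteq> topspace X" for k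
    using clopen openin_subset unfolding clopenin_def by blast
  define A where "A = range (\<lambda>k. char_map X (D k))"
  have "finite {f \<in> A. f x}" if x: "x \<in> topspace X" for x
  proof -
    have "{k. x \<in> D k} \<subseteq> {LEAST k. x \<in> D k}"
    proof
      fix k assume k: "k \<in> {k. x \<in> D k}"
      then have "x \<in> D (LEAST k. x \<in> D k)" by (auto intro: LeastI)
      with k disj show "k \<in> {LEAST k. x \<in> D k}" by (auto simp: disjoint_family_on_def)
    qed
    then have "finite ((\<lambda>k. char_map X (D k)) ` {k. x \<in> D k})"
      by (meson finite.intros finite_imageI finite_subset)
    moreover have "{f \<in> A. f x} = (\<lambda>k. char_map X (D k)) ` {k. x \<in> D k}"
      using x by (auto simp: A_def char_map_def)
    ultimately show ?thesis by simp
  qed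
  moreover have "A \<subseteq> topspace (Cp01 X)"
    unfolding A_def using char_map_in_Cp01 clopen by blast
  moreover have "\<forall>f \<in> A. cozero X f \<subseteq> \<Union>\<C>"
    unfolding A_def using D cozero_char_map[OF D_sub] by blast
  moreover have "\<forall>x \<in> \<Union>\<C>. \<exists>f \<in> A. f x"
    unfolding A_def using D D_sub by (fastforce simp: char_map_def)
  moreover have "countable A" unfolding A_def by simp
  ultimately show ?thesis
    unfolding point_finite_clopen_cover_def point_finite_def by blast
qed

(* Finite families are simply dropped (B n = {}); if all are finite, no
   selection is needed and e is constantly zero. *)
lemma alpha1_cofinite_selection:
  fixes A :: "nat \<Rightarrow> ('a \<Rightarrow> bool) set"
  assumes alpha1: "alpha1_space (Cp01 X)"
    and A: "\<And>n. A n \<subseteq> topspace (Cp01 X)" "\<And>n. countable (A n)" "\<And>n. point_finite X (A n)"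
  obtains B e where "\<And>n. B n \<subseteq> A n" "\<And>n. finite (A n - B n)" "(\<Union>n. B n) \<subseteq> range e"
    "range e \<subseteq> topspace (Cp01 X)" "\<forall>x \<in> topspace X. finite {j :: nat. e j x}"
proof (cases "\<forall>n. finite (A n)")
  case True
  then show ?thesis
    using that[of "\<lambda>_. {}" "\<lambda>_. zero_map X"] zero_map_in_Cp01[of X] by (auto simp: zero_map_def)
next
  case False
  then obtain n0 where n0: "infinite (A n0)" by blast
  define A' where "A' n = (if infinite (A n) then A n else A n0)" for n
  have A': "A' n \<subseteq> topspace (Cp01 X) \<and> countable (A' n) \<and> infinite (A' n) \<and>
        set_converges (Cp01 X) (A' n) (zero_map X)" for n
    unfolding A'_def using n0 A set_converges_zero_map_if_point_finite[OF A(1,2) _ A(3)] by simp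
  then have "\<exists>B'. (\<forall>n. B' n \<subseteq> A' n \<and> finite (A' n - B' n)) \<and>
               set_converges (Cp01 X) (\<Union>n. B' n) (zero_map X)"
    using alpha1[unfolded alpha1_space_def, rule_format, OF zero_map_in_Cp01, where A=A'] by blast
  then obtain B' where B': "\<And>n. B' n \<subseteq> A' n" "\<And>n. finite (A' n - B' n)"
    and converges: "set_converges (Cp01 X) (\<Union>n. B' n) (zero_map X)"
    by blast
  obtain e :: "nat \<Rightarrow> 'a \<Rightarrow> bool" where e: "bij_betw e UNIV (\<Union>n. B' n)" "\<forall>x \<in> topspace X. finite {j. e j x}"
    using enumeration_if_set_converges_zero_map[OF converges] by blast
  define B where "B n = (if infinite (A n) then B' n else {})" for n
  have range_e: "range e = (\<Union>n. B' n)"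
    using e(1) by (simp add: bij_betw_def)
  then have "range e \<subseteq> topspace (Cp01 X)"
    using B'(1) A' by blast
  moreover have "(\<Union>n. B n) \<subseteq> range e"
    unfolding range_e B_def by auto
  moreover have "B n \<subseteq> A n" "finite (A n - B n)" for n
    using B'[of n] unfolding B_def A'_def by auto
  ultimately show ?thesis using that e(2) by blast
qed

definition approximant ::
    "'a topology \<Rightarrow> (nat \<Rightarrow> 'a set) \<Rightarrow> (nat \<Rightarrow> ('a \<Rightarrow> bool) set) \<Rightarrow> (nat \<Rightarrow> 'a \<Rightarrow> bool) \<Rightarrow>
     nat \<Rightarrow> 'a \<Rightarrow> nat set" where
  "approximant X U R e m x = {n. (\<exists>f \<in> R n. f x) \<or> (\<exists>j \<le> m. e j x \<and> cozero X (e j) \<subseteq> U n)}"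

(* Every coordinate set of an approximant is a finite union of clopen supports. *)
lemma continuous_map_approximant:
  assumes "\<And>n. finite (R n)" "\<And>n. R n \<subseteq> topspace (Cp01 X)" "range e \<subseteq> topspace (Cp01 X)"
  shows "continuous_map X powerset_nat_top (approximant X U R e m)"
proof (rule continuous_map_powerset_nat_top)
  fix n
  have clopen_cozero: "clopenin X (cozero X f)" if "f \<in> topspace (Cp01 X)" for f
    using that topspace_Cp01 by blast
  have "{x \<in> topspace X. n \<in> approximant X U R e m x} =
        (\<Union>f \<in> R n. cozero X f) \<union> (\<Union>j \<in> {j. j \<le> m \<and> cozero X (e j) \<subseteq> U n}. cozero X (e j))"
    unfolding approximant_def cozero_def by blast
  moreover have "clopenin X ((\<Union>f \<in> R n. cozero X f) \<union>
                   (\<Union>j \<in> {j. j \<le> m \<and> cozero X (e j) \<subseteq> U n}. cozero X (e j)))"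
    using assms by (intro clopenin_Un clopenin_Union) (auto intro!: clopen_cozero)
  ultimately show "clopenin X {x \<in> topspace X. n \<in> approximant X U R e m x}" by simp
qed

lemma discrete_limit_approximant:
  assumes remainder: "\<And>n. \<forall>f \<in> R n. cozero X f \<subseteq> U n"
    and cover: "\<And>n x. x \<in> U n \<Longrightarrow> \<exists>f. f x \<and> cozero X f \<subseteq> U n \<and> (f \<in> R n \<or> f \<in> range e)"
    and finitely_many: "\<forall>x \<in> topspace X. finite {j. e j x}"
  shows "discrete_limit (topspace X) (approximant X U R e) (marczewski U)"
  unfolding discrete_limit_def
proof
  fix x assume x: "x \<in> topspace X"
  obtain N where N: "{j. e j x} \<subseteq> {..<N}"
    using finitely_many x finite_nat_bounded by blast
  have "approximant X U R e m x = marczewski U x" if "N \<le> m" for m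
  proof (rule equalityI)
    show "approximant X U R e m x \<subseteq> marczewski U x"
      using remainder x unfolding approximant_def marczewski_def cozero_def by auto
    show "marczewski U x \<subseteq> approximant X U R e m x"
    proof
      fix n assume "n \<in> marczewski U x"
      then have "x \<in> U n" by (simp add: marczewski_def)
      then obtain f where "f x \<and> cozero X f \<subseteq> U n \<and> (f \<in> R n \<or> f \<in> range e)"
        using cover by meson
      then have f: "f x" "cozero X f \<subseteq> U n" and "f \<in> R n \<or> f \<in> range e" by simp_all
      then consider "f \<in> R n" | j where "f = e j" by blast
      then show "n \<in> approximant X U R e m x"
      proof cases
        case 1
        then show ?thesis using f unfolding approximant_def by blast
      next
        case (2 j)
        then have "j \<le> m" using N f(1) \<open>N \<le> m\<close> by auto
        then show ?thesis using f 2 unfolding approximant_def by blast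
      qed
    qed
  qed
  then show "\<forall>\<^sub>F m in sequentially. approximant X U R e m x = marczewski U x"
    unfolding eventually_sequentially by blast
qed

lemma marczewski_discrete_limit_if_covers:
  assumes alpha1: "alpha1_space (Cp01 X)"
    and A: "\<And>n. point_finite_clopen_cover X (U n) (A n)"
  shows "\<exists>\<Psi> :: nat \<Rightarrow> 'a \<Rightarrow> nat set.
           (\<forall>m. continuous_map X powerset_nat_top (\<Psi> m)) \<and>
           discrete_limit (topspace X) \<Psi> (marczewski U)"
proof -
  from A have A_props: "A n \<subseteq> topspace (Cp01 X)" "countable (A n)" "point_finite X (A n)" for n
    unfolding point_finite_clopen_cover_def by simp_all
  then obtain B e where B: "\<And>n. B n \<subseteq> A n" "\<And>n. finite (A n - B n)" "(\<Union>n. B n) \<subseteq> range e"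
    and e: "range e \<subseteq> topspace (Cp01 X)" "\<forall>x \<in> topspace X. finite {j :: nat. e j x}"
    using alpha1_cofinite_selection[OF alpha1] by metis
  define R where "R n = A n - B n" for n
  have "continuous_map X powerset_nat_top (approximant X U R e m)" for m
  proof (rule continuous_map_approximant)
    show "finite (R n)" "R n \<subseteq> topspace (Cp01 X)" for n
      using B(2) A_props(1) unfolding R_def by auto
  qed (rule e(1))
  moreover have "discrete_limit (topspace X) (approximant X U R e) (marczewski U)"
  proof (rule discrete_limit_approximant[OF _ _ e(2)])
    show "\<forall>f \<in> R n. cozero X f \<subseteq> U n" for n
      using A[of n] unfolding R_def point_finite_clopen_cover_def by simp
    show "\<exists>f. f x \<and> cozero X f \<subseteq> U n \<and> (f \<in> R n \<or> f \<in> range e)" if xU: "x \<in> U n" for n x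
    proof -
      obtain f where f: "f \<in> A n" "f x"
        using A[of n] xU unfolding point_finite_clopen_cover_def by auto
      then have "cozero X f \<subseteq> U n" "f \<in> R n \<or> f \<in> range e"
        using A[of n] B(3) unfolding R_def point_finite_clopen_cover_def by auto
      with f show ?thesis by auto
    qed
  qed
  ultimately show ?thesis by blast
qed

theorem mainTheorem5:
  fixes X :: "'a topology" and U :: "nat \<Rightarrow> 'a set"
  assumes clopen_base: "\<forall>V. openin X V \<longrightarrow>
            (\<exists>\<C>. countable \<C> \<and> (\<forall>C \<in> \<C>. openin X C \<and> closedin X C) \<and> \<Union>\<C> = V)"
    and alpha1: "alpha1_space (Cp01 X)"
    and inj: "inj U"
    and opens: "\<forall>n. openin X (U n)"
  shows "\<exists>\<Psi> :: nat \<Rightarrow> 'a \<Rightarrow> nat set.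
           (\<forall>m. continuous_map X powerset_nat_top (\<Psi> m)) \<and>
           discrete_limit (topspace X) \<Psi> (marczewski U)"
proof -
  have "\<exists>A. point_finite_clopen_cover X (U n) A" for n
  proof -
    obtain \<C> where "countable \<C>" "\<forall>C \<in> \<C>. clopenin X C" "\<Union>\<C> = U n"
      using clopen_base[rule_format, OF opens[rule_format, of n]] by (auto simp: clopenin_def)
    then show ?thesis using point_finite_clopen_cover_exists[of \<C> X] by simp
  qed
  then obtain A where "\<And>n. point_finite_clopen_cover X (U n) (A n)"
    by metis
  then show ?thesis
    by (rule marczewski_discrete_limit_if_covers[OF alpha1])
qed

end
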